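(* Let $\Sigma \rightarrow G$ be a twist, where $G$ is a locally compact Hausdorff étale groupoid, and let $L \colon G \rightarrow [0,\infty)$ be a continuous length function on $G$. Let $p\in\mathbb{Z}_+$. If $f \in H^{2,L,p}(\Sigma; G)$ has open support $U \subseteq G$, then $f$ lies in the closure of $C_c(\Sigma|_U;U)$ with respect to $\|\cdot\|_{2,p,L}$. In particular, if $f \in H^{2,L}(\Sigma; G)$ has open support $U \subseteq G$, then $f \in H^{2,L}(\Sigma|_U;U)$.
   Context: A twist $\Sigma\rightarrow G$ is a locally trivial central extension $\mathbb{T}\times G^{(0)}\to\Sigma\to G$; it determines a line bundle over $G$ whose fibres carry an absolute value. $C_c(\Sigma;G)$ is the space of continuous compactly supported sections of this bundle, $C_0(\Sigma;G)$ the continuous sections vanishing at infinity, and for $U\subseteq G$, $C_c(\Sigma|_U;U)$ (resp. $C_0(\Sigma|_U;U)$) the sections supported in $U$. The support of a section $f$ is $\operatorname{supp}(f)=\{\gamma: f(\gamma)\ne0\}$. A length function is $L\colon G\to[0,\infty)$ with $L|_{G^{(0)}}=0$, $L(\gamma)=L(\gamma^{-1})$, and $L(\gamma_1\gamma_2)\le L(\gamma_1)+L(\gamma_2)$ for composable pairs. For $p\in\mathbb{Z}_+$ and $f\in C_c(\Sigma;G)$ set $\|f\|_{2,p,L}=\max\{\sup_{x}(\sum_{\gamma\in G_x}|f(\gamma)|^2(1+L(\gamma))^{2p})^{1/2},\ \sup_x(\sum_{\gamma\in G^x}|f(\gamma)|^2(1+L(\gamma))^{2p})^{1/2}\}$,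 where $G_x=s^{-1}(x)$, $G^x=r^{-1}(x)$. $H^{2,L,p}(\Sigma;G)$ is the completion of $C_c(\Sigma;G)$ in $\|\cdot\|_{2,p,L}$ (viewed as sections), and the Schwartz space is $H^{2,L}(\Sigma;G)=\bigcap_{p\in\mathbb{Z}_+}H^{2,L,p}(\Sigma;G)\cap C_0(\Sigma;G)$. For $U\subseteq G$, $H^{2,L}(\Sigma|_U;U)=\bigcap_{p\ge1}\overline{C_c(\Sigma|_U;U)}^{\|\cdot\|_{2,p,L}}\cap C_0(\Sigma|_U;U)$. *)

theory Defs
  imports "HOL-Analysis.Analysis"
begin

section \<open>Groupoids (the whole type is the arrow space)\<close>

text \<open>r = range map, s = source map, m = multiplication (defined on composable
pairs, i.e. s a = r b), i = inversion. The unit space is range r.\<close>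

definition groupoid :: "('g \<Rightarrow> 'g) \<Rightarrow> ('g \<Rightarrow> 'g) \<Rightarrow> ('g \<Rightarrow> 'g \<Rightarrow> 'g) \<Rightarrow> ('g \<Rightarrow> 'g) \<Rightarrow> bool" where
  "groupoid r s m i \<longleftrightarrow>
     (\<forall>a. r (r a) = r a \<and> s (r a) = r a \<and> r (s a) = s a \<and> s (s a) = s a) \<and>
     (\<forall>a b. s a = r b \<longrightarrow> r (m a b) = r a \<and> s (m a b) = s b) \<and>
     (\<forall>a b c. s a = r b \<and> s b = r c \<longrightarrow> m (m a b) c = m a (m b c)) \<and>
     (\<forall>a. m (r a) a = a \<and> m a (s a) = a) \<and>
     (\<forall>a. s (i a) = r a \<and> r (i a) = s a \<and> m a (i a) = r a \<and> m (i a) a = s a)"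

definition topological_groupoid ::
  "('g::topological_space \<Rightarrow> 'g) \<Rightarrow> ('g \<Rightarrow> 'g) \<Rightarrow> ('g \<Rightarrow> 'g \<Rightarrow> 'g) \<Rightarrow> ('g \<Rightarrow> 'g) \<Rightarrow> bool" where
  "topological_groupoid r s m i \<longleftrightarrow>
     groupoid r s m i \<and> continuous_on UNIV r \<and> continuous_on UNIV s \<and>
     continuous_on UNIV i \<and> continuous_on {(a, b). s a = r b} (\<lambda>(a, b). m a b)"

definition lch_etale_groupoid ::
  "('g::t2_space \<Rightarrow> 'g) \<Rightarrow> ('g \<Rightarrow> 'g) \<Rightarrow> ('g \<Rightarrow> 'g \<Rightarrow> 'g) \<Rightarrow> ('g \<Rightarrow> 'g) \<Rightarrow> bool" where
  "lch_etale_groupoid r s m i \<longleftrightarrow>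
     topological_groupoid r s m i \<and>
     locally_compact_space (euclidean :: 'g topology) \<and>
     (\<forall>\<gamma>. \<exists>V. open V \<and> \<gamma> \<in> V \<and> open (s ` V) \<and> (\<exists>g. homeomorphism V (s ` V) s g))"

abbreviation circle :: "complex set" where "circle \<equiv> sphere 0 1"

text \<open>A twist T x G0 \<rightarrow> Sigma \<rightarrow> G: Sigma is a topological groupoid (rS,sS,mS,iS)
on the type 's, \<pi> : Sigma \<rightarrow> G is a continuous surjective groupoid homomorphism
which is a bijection on unit spaces, \<iota> : T x G0 \<rightarrow> Sigma (written curried as
\<iota> z x) is a homeomorphism onto \<pi>^{-1}(G0), a homomorphism of the group bundle
T x G0, whose image is central, and the extension is locally trivial.\<close>

definition twist ::
  "('g::t2_space \<Rightarrow> 'g) \<Rightarrow> ('g \<Rightarrow> 'g) \<Rightarrow> ('g \<Rightarrow> 'g \<Rightarrow> 'g) \<Rightarrow> ('g \<Rightarrow> 'g) \<Rightarrow>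
   ('s::topological_space \<Rightarrow> 's) \<Rightarrow> ('s \<Rightarrow> 's) \<Rightarrow> ('s \<Rightarrow> 's \<Rightarrow> 's) \<Rightarrow> ('s \<Rightarrow> 's) \<Rightarrow>
   ('s \<Rightarrow> 'g) \<Rightarrow> (complex \<Rightarrow> 'g \<Rightarrow> 's) \<Rightarrow> bool" where
  "twist r s m i rS sS mS iS \<pi> \<iota> \<longleftrightarrow>
     topological_groupoid rS sS mS iS \<and>
     \<comment> \<open>\<pi> continuous surjective groupoid homomorphism\<close>
     continuous_on UNIV \<pi> \<and> surj \<pi> \<and>
     (\<forall>a. \<pi> (rS a) = r (\<pi> a) \<and> \<pi> (sS a) = s (\<pi> a)) \<and>
     (\<forall>a b. sS a = rS b \<longrightarrow> \<pi> (mS a b) = m (\<pi> a) (\<pi> b)) \<and>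
     \<comment> \<open>\<pi> identifies the unit spaces\<close>
     inj_on \<pi> (range rS) \<and>
     \<comment> \<open>\<iota> is a groupoid homomorphism from T x G0 into Sigma over G0\<close>
     (\<forall>z\<in>circle. \<forall>x\<in>range r. \<pi> (\<iota> z x) = x \<and> rS (\<iota> z x) = sS (\<iota> z x)) \<and>
     (\<forall>x\<in>range r. \<iota> 1 x \<in> range rS) \<and>
     (\<forall>z\<in>circle. \<forall>w\<in>circle. \<forall>x\<in>range r. \<iota> (z * w) x = mS (\<iota> z x) (\<iota> w x)) \<and>
     \<comment> \<open>\<iota> is a homeomorphism of T x G0 onto \<pi>^{-1}(G0) (injective + exactness)\<close>
     (\<exists>g. homeomorphism (circle \<times> range r) (\<pi> -` range r) (\<lambda>(z, x). \<iota> z x) g) \<and>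
     \<comment> \<open>centrality\<close>
     (\<forall>z\<in>circle. \<forall>\<sigma>. mS (\<iota> z (r (\<pi> \<sigma>))) \<sigma> = mS \<sigma> (\<iota> z (s (\<pi> \<sigma>)))) \<and>
     \<comment> \<open>local triviality\<close>
     (\<forall>\<gamma>. \<exists>V c. open V \<and> \<gamma> \<in> V \<and> continuous_on V c \<and> (\<forall>\<delta>\<in>V. \<pi> (c \<delta>) = \<delta>) \<and>
        (\<exists>g. homeomorphism (circle \<times> V) (\<pi> -` V) (\<lambda>(z, \<delta>). mS (\<iota> z (r \<delta>)) (c \<delta>)) g))"

definition tact :: "('g \<Rightarrow> 'g) \<Rightarrow> ('s \<Rightarrow> 's \<Rightarrow> 's) \<Rightarrow> ('s \<Rightarrow> 'g) \<Rightarrow> (complex \<Rightarrow> 'g \<Rightarrow> 's)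
   \<Rightarrow> complex \<Rightarrow> 's \<Rightarrow> 's" where
  "tact r mS \<pi> \<iota> z \<sigma> = mS (\<iota> z (r (\<pi> \<sigma>))) \<sigma>"

text \<open>A section of the line bundle of the twist is a function f on Sigma with
f(z\<cdot>\<sigma>) = z f(\<sigma>) for z in T.\<close>

definition is_section where
  "is_section r mS \<pi> \<iota> (f :: 's \<Rightarrow> complex) \<longleftrightarrow>
     (\<forall>z\<in>circle. \<forall>\<sigma>. f (tact r mS \<pi> \<iota> z \<sigma>) = z * f \<sigma>)"

definition sec_supp :: "('s \<Rightarrow> 'g) \<Rightarrow> ('s \<Rightarrow> complex) \<Rightarrow> 'g set" where
  "sec_supp \<pi> f = \<pi> ` {\<sigma>. f \<sigma> \<noteq> 0}"

text \<open>The absolute value |f(\<gamma>)|, well defined for sections.\<close>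

definition sec_abs :: "('s \<Rightarrow> 'g) \<Rightarrow> ('s \<Rightarrow> complex) \<Rightarrow> 'g \<Rightarrow> real" where
  "sec_abs \<pi> f \<gamma> = norm (f (SOME \<sigma>. \<pi> \<sigma> = \<gamma>))"

text \<open>C_c(Sigma|_U;U): continuous compactly supported sections supported in U
(U = UNIV gives C_c(Sigma;G)).\<close>

definition Cc_sec where
  "Cc_sec r mS \<pi> \<iota> U =
     {f. is_section r mS \<pi> \<iota> f \<and> continuous_on UNIV f \<and>
         compact (closure (sec_supp \<pi> f)) \<and> sec_supp \<pi> f \<subseteq> U}"

definition C0_sec where
  "C0_sec r mS \<pi> \<iota> U =
     {f. is_section r mS \<pi> \<iota> f \<and> continuous_on UNIV f \<and>
         (\<forall>\<epsilon>>0. compact (\<pi> ` {\<sigma>. \<epsilon> \<le> norm (f \<sigma>)})) \<and> sec_supp \<pi> f \<subseteq> U}"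

definition length_function :: "('g \<Rightarrow> 'g) \<Rightarrow> ('g \<Rightarrow> 'g) \<Rightarrow> ('g \<Rightarrow> 'g \<Rightarrow> 'g) \<Rightarrow> ('g \<Rightarrow> 'g)
   \<Rightarrow> ('g \<Rightarrow> real) \<Rightarrow> bool" where
  "length_function r s m i L \<longleftrightarrow>
     (\<forall>\<gamma>. L \<gamma> \<ge> 0) \<and> (\<forall>x\<in>range r. L x = 0) \<and> (\<forall>\<gamma>. L (i \<gamma>) = L \<gamma>) \<and>
     (\<forall>a b. s a = r b \<longrightarrow> L (m a b) \<le> L a + L b)"

text \<open>The square of the norm \<parallel>f\<parallel>_{2,p,L}, valued in [0,\<infinity>] so that it makes
sense for arbitrary sections.\<close>

definition norm2pL_sq :: "('g \<Rightarrow> 'g) \<Rightarrow> ('g \<Rightarrow> 'g) \<Rightarrow> ('s \<Rightarrow> 'g) \<Rightarrow> ('g \<Rightarrow> real) \<Rightarrow> nat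
   \<Rightarrow> ('s \<Rightarrow> complex) \<Rightarrow> ennreal" where
  "norm2pL_sq r s \<pi> L p f =
     max (SUP x\<in>range r. \<Sum>\<^sub>\<infinity>\<gamma>\<in>{\<gamma>. s \<gamma> = x}.
            ennreal ((sec_abs \<pi> f \<gamma>)\<^sup>2 * (1 + L \<gamma>) ^ (2 * p)))
         (SUP x\<in>range r. \<Sum>\<^sub>\<infinity>\<gamma>\<in>{\<gamma>. r \<gamma> = x}.
            ennreal ((sec_abs \<pi> f \<gamma>)\<^sup>2 * (1 + L \<gamma>) ^ (2 * p)))"

text \<open>Closure of a set A of sections with respect to \<parallel>.\<parallel>_{2,p,L}, realised
inside the space of all sections (this is the completion viewed as sections).\<close>

definition sec_closure where
  "sec_closure r s mS \<pi> \<iota> L p A =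
     {f. is_section r mS \<pi> \<iota> f \<and>
         (\<exists>F. (\<forall>n. F n \<in> A) \<and>
              (\<lambda>n. norm2pL_sq r s \<pi> L p (\<lambda>\<sigma>. F n \<sigma> - f \<sigma>)) \<longlonglongrightarrow> 0)}"

definition H2Lp where
  "H2Lp r s mS \<pi> \<iota> L p = sec_closure r s mS \<pi> \<iota> L p (Cc_sec r mS \<pi> \<iota> UNIV)"

text \<open>Schwartz space H^{2,L}(Sigma|_U;U); U = UNIV gives H^{2,L}(Sigma;G).
p ranges over nat (the p = 0 term is implied by p = 1 anyway).\<close>

definition H2L where
  "H2L r s mS \<pi> \<iota> L U =
     (\<Inter>p. sec_closure r s mS \<pi> \<iota> L p (Cc_sec r mS \<pi> \<iota> U)) \<inter> C0_sec r mS \<pi> \<iota> U"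

end

theory Submission
  imports Defs
begin

(* Let F n in C_c converge to f in the (2,p,L)-norm. That norm dominates the sup norm, so F n -> f
   uniformly and f is continuous. Contract f radially by e > 0, f_e = shrink e o f: it is a continuous
   section supported in supp f, and it vanishes wherever |f| <= e, so as soon as |F n - f| < e
   everywhere its support lies in the compact set closure (supp (F n)); hence f_e is in C_c(Sigma|_U;U).
   Pointwise |f_e - f| = min |f| e <= |F n - f| + min |F n| e. In an etale groupoid the fibres of r
   and s meet a compact set in uniformly boundedly many points, and L is bounded there, so
   ||f_e - f||^2 <= 2 ||F n - f||^2 + C_n e^2. Letting e -> 0 and then n -> infinity gives f_e -> f. *)

lemma groupoid_inverse_inverse:
  assumes "groupoid r s m i"
  shows "i (i a) = a"
proof -
  note G = assms[unfolded groupoid_def]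
  have "i (i a) = m (i (i a)) (s (i (i a)))" using G by metis
  also have "\<dots> = m (i (i a)) (m (i a) a)" using G by metis
  also have "\<dots> = m (m (i (i a)) (i a)) a"
  proof -
    have "s (i (i a)) = r (i a)" "s (i a) = r a" using G by metis+
    then show ?thesis using G by metis
  qed
  also have "m (i (i a)) (i a) = r a" using G by metis
  also have "m (r a) a = a" using G by metis
  finally show ?thesis .
qed

lemma locally_injective_fibres_bounded_on_compact:
  fixes f :: "'a::topological_space \<Rightarrow> 'b"
  assumes loc_inj: "\<And>\<gamma>. \<exists>V. open V \<and> \<gamma> \<in> V \<and> inj_on f V" and "compact K"
  shows "\<exists>N. \<forall>x. finite {\<gamma>\<in>K. f \<gamma> = x} \<and> card {\<gamma>\<in>K. f \<gamma> = x} \<le> N"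
proof -
  obtain V where V: "\<And>\<gamma>. open (V \<gamma>) \<and> \<gamma> \<in> V \<gamma> \<and> inj_on f (V \<gamma>)"
    using loc_inj by metis
  have "K \<subseteq> \<Union> (V ` K)" using V by blast
  then obtain T where T: "T \<subseteq> K" "finite T" "K \<subseteq> \<Union> (V ` T)"
    using compactE_image[OF \<open>compact K\<close>, of K V] V by metis
  obtain h where h: "\<And>\<gamma>. \<gamma> \<in> K \<Longrightarrow> h \<gamma> \<in> T \<and> \<gamma> \<in> V (h \<gamma>)"
    using T(3) by (metis UN_iff subsetD)
  have "finite {\<gamma>\<in>K. f \<gamma> = x} \<and> card {\<gamma>\<in>K. f \<gamma> = x} \<le> card T" for x
  proof -
    have "inj_on h {\<gamma>\<in>K. f \<gamma> = x}"
    proof (rule inj_onI)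
      fix a b assume a: "a \<in> {\<gamma>\<in>K. f \<gamma> = x}" and b: "b \<in> {\<gamma>\<in>K. f \<gamma> = x}"
        and hab: "h a = h b"
      have "a \<in> V (h a)" "b \<in> V (h a)" using h[of a] h[of b] a b hab by auto
      moreover have "f a = f b" using a b by simp
      ultimately show "a = b" using V[of "h a"] by (meson inj_onD)
    qed
    moreover have "h ` {\<gamma>\<in>K. f \<gamma> = x} \<subseteq> T" using h by auto
    ultimately show ?thesis using T(2) by (meson card_inj_on_le finite_imageD finite_subset)
  qed
  then show ?thesis by (intro exI[of _ "card T"]) blast
qed

lemma lch_etale_groupoid_fibres_bounded_on_compact:
  assumes E: "lch_etale_groupoid r s m i" and "compact K"
  shows "\<exists>N. \<forall>x. finite {\<gamma>\<in>K. s \<gamma> = x} \<and> card {\<gamma>\<in>K. s \<gamma> = x} \<le> N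
                \<and> finite {\<gamma>\<in>K. r \<gamma> = x} \<and> card {\<gamma>\<in>K. r \<gamma> = x} \<le> N"
proof -
  have G: "groupoid r s m i" and ci: "continuous_on UNIV i"
    using E unfolding lch_etale_groupoid_def topological_groupoid_def by blast+
  have s_loc_inj: "\<exists>V. open V \<and> \<gamma> \<in> V \<and> inj_on s V" for \<gamma>
  proof -
    obtain V g where "open V" "\<gamma> \<in> V" "homeomorphism V (s ` V) s g"
      using E unfolding lch_etale_groupoid_def by blast
    then have "inj_on s V" unfolding homeomorphism_def by (metis inj_on_inverseI)
    then show ?thesis using \<open>open V\<close> \<open>\<gamma> \<in> V\<close> by blast
  qed
  have r_loc_inj: "\<exists>V. open V \<and> \<gamma> \<in> V \<and> inj_on r V" for \<gamma>
  proof -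
    obtain V where V: "open V" "i \<gamma> \<in> V" "inj_on s V" using s_loc_inj by blast
    have "open (i -` V)" using ci V(1) by (simp add: continuous_on_open_vimage)
    moreover have "inj_on r (i -` V)"
    proof (rule inj_onI)
      fix a b assume "a \<in> i -` V" "b \<in> i -` V" "r a = r b"
      moreover have "\<And>c. s (i c) = r c" using G unfolding groupoid_def by blast
      ultimately have "i a = i b" using V(3) by (metis inj_onD vimageE)
      then show "a = b" using groupoid_inverse_inverse[OF G] by metis
    qed
    ultimately show ?thesis using V(2) by blast
  qed
  obtain Ns where Ns: "\<And>x. finite {\<gamma>\<in>K. s \<gamma> = x} \<and> card {\<gamma>\<in>K. s \<gamma> = x} \<le> Ns"
    using locally_injective_fibres_bounded_on_compact[OF s_loc_inj \<open>compact K\<close>] by blast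
  obtain Nr where Nr: "\<And>x. finite {\<gamma>\<in>K. r \<gamma> = x} \<and> card {\<gamma>\<in>K. r \<gamma> = x} \<le> Nr"
    using locally_injective_fibres_bounded_on_compact[OF r_loc_inj \<open>compact K\<close>] by blast
  show ?thesis
  proof (intro exI[of _ "max Ns Nr"] allI conjI)
    fix x
    show "finite {\<gamma>\<in>K. s \<gamma> = x}" "finite {\<gamma>\<in>K. r \<gamma> = x}" using Ns Nr by blast+
    show "card {\<gamma>\<in>K. s \<gamma> = x} \<le> max Ns Nr" "card {\<gamma>\<in>K. r \<gamma> = x} \<le> max Ns Nr"
      using Ns[of x] Nr[of x] by auto
  qed
qed

(* Radial contraction towards 0 by e. At z = 0 the quotient is the junk value 0 / 0 = 0, which is
   harmless because the factor z vanishes. *)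
definition shrink :: "real \<Rightarrow> complex \<Rightarrow> complex" where
  "shrink e z = z * complex_of_real (max 0 (norm z - e) / norm z)"

lemma shrink_mult_unimodular: "norm w = 1 \<Longrightarrow> shrink e (w * z) = w * shrink e z"
  unfolding shrink_def by (simp add: norm_mult)

lemma norm_shrink: "e \<ge> 0 \<Longrightarrow> norm (shrink e z) = max 0 (norm z - e)"
  unfolding shrink_def norm_mult norm_of_real by (cases "z = 0") auto

lemma shrink_eq_0_iff: "e \<ge> 0 \<Longrightarrow> shrink e z = 0 \<longleftrightarrow> norm z \<le> e"
  unfolding shrink_def by (auto simp: max_def)

lemma norm_shrink_diff:
  assumes "e \<ge> 0"
  shows "norm (shrink e z - z) = min (norm z) e"
proof (cases "z = 0")
  case False
  have "shrink e z - z = z * complex_of_real (max 0 (norm z - e) / norm z - 1)"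
    unfolding shrink_def by (simp add: algebra_simps)
  then have "norm (shrink e z - z) = \<bar>norm z * (max 0 (norm z - e) / norm z - 1)\<bar>"
    by (simp only: norm_mult norm_of_real abs_mult abs_norm_cancel)
  also have "norm z * (max 0 (norm z - e) / norm z - 1) = max 0 (norm z - e) - norm z"
    using False by (simp add: algebra_simps)
  finally show ?thesis using assms by (simp add: max_def min_def)
qed (use assms in \<open>simp add: shrink_def\<close>)

lemma continuous_on_shrink:
  assumes "e \<ge> 0"
  shows "continuous_on UNIV (shrink e)"
proof (rule continuous_at_imp_continuous_on, intro ballI)
  fix z :: complex
  show "isCont (shrink e) z"
  proof (cases "z = 0")
    case False
    then show ?thesis unfolding shrink_def by (intro continuous_intros; simp)
  next
    case True
    have "eventually (\<lambda>x. norm (shrink e x) \<le> norm x) (at 0)"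
      using assms by (simp add: norm_shrink always_eventually)
    moreover have "((\<lambda>x::complex. norm x) \<longlongrightarrow> 0) (at 0)"
      by (intro tendsto_norm_zero tendsto_ident_at)
    ultimately have "(shrink e \<longlongrightarrow> 0) (at 0)"
      by (rule Lim_null_comparison)
    then show ?thesis using True by (simp add: isCont_def shrink_def)
  qed
qed

lemma shrink_error_sq_le:
  assumes "e \<ge> 0"
  shows "(norm (shrink e z - z))\<^sup>2 \<le> 2 * (norm (y - z))\<^sup>2 + (if y = 0 then 0 else 2 * e\<^sup>2)"
proof -
  define a where "a = norm (y - z)"
  define b where "b = (if y = 0 then 0 else e)"
  have "min (norm z) e \<le> a + b"
    using norm_triangle_ineq3[of y z] assms unfolding a_def b_def by (auto simp: min_def)
  then have "(min (norm z) e)\<^sup>2 \<le> (a + b)\<^sup>2"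
    using assms by (intro power_mono) simp_all
  also have "\<dots> \<le> 2 * a\<^sup>2 + 2 * b\<^sup>2"
    using zero_le_power2[of "a - b"] by (simp add: power2_eq_square algebra_simps)
  finally show ?thesis
    using norm_shrink_diff[OF assms] unfolding a_def b_def by (simp split: if_splits)
qed

lemma infsum_shrink_error_le:
  fixes u v :: "'a \<Rightarrow> complex" and w :: "'a \<Rightarrow> real"
  assumes e: "e \<ge> 0" and w: "\<And>\<gamma>. w \<gamma> \<ge> 0"
    and v_supp: "\<And>\<gamma>. v \<gamma> \<noteq> 0 \<Longrightarrow> \<gamma> \<in> K" and W: "\<And>\<gamma>. \<gamma> \<in> K \<Longrightarrow> w \<gamma> \<le> W"
    and fin: "finite (A \<inter> K)" and card: "card (A \<inter> K) \<le> N"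
  shows "(\<Sum>\<^sub>\<infinity>\<gamma>\<in>A. ennreal ((norm (shrink e (u \<gamma>) - u \<gamma>))\<^sup>2 * w \<gamma>))
     \<le> 2 * (\<Sum>\<^sub>\<infinity>\<gamma>\<in>A. ennreal ((norm (v \<gamma> - u \<gamma>))\<^sup>2 * w \<gamma>)) + ennreal (2 * e\<^sup>2 * W * N)"
proof -
  define c where "c = 2 * e\<^sup>2 * W"
  let ?err = "\<lambda>\<gamma>. ennreal ((norm (shrink e (u \<gamma>) - u \<gamma>))\<^sup>2 * w \<gamma>)"
  let ?dist = "\<lambda>\<gamma>. ennreal ((norm (v \<gamma> - u \<gamma>))\<^sup>2 * w \<gamma>)"
  let ?cK = "\<lambda>\<gamma>. ennreal (if \<gamma> \<in> K then c else 0)"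
  have pointwise: "?err \<gamma> \<le> ?dist \<gamma> + ?dist \<gamma> + ?cK \<gamma>" for \<gamma>
  proof -
    define d where "d = (norm (v \<gamma> - u \<gamma>))\<^sup>2 * w \<gamma>"
    define I where "I = (if \<gamma> \<in> K then c else 0)"
    have "d \<ge> 0" using w[of \<gamma>] by (simp add: d_def)
    have I_bound: "(if v \<gamma> = 0 then 0 else 2 * e\<^sup>2) * w \<gamma> \<le> I"
    proof (cases "v \<gamma> = 0")
      case True
      then show ?thesis using W[of \<gamma>] w[of \<gamma>] by (auto simp: I_def c_def)
    next
      case False
      then have "\<gamma> \<in> K" by (rule v_supp)
      then show ?thesis using W[of \<gamma>] False by (simp add: I_def c_def mult_left_mono)
    qed
    have "I \<ge> 0" by (rule order_trans[OF _ I_bound]) (use w[of \<gamma>] in simp)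
    moreover have "(norm (shrink e (u \<gamma>) - u \<gamma>))\<^sup>2 * w \<gamma>
        \<le> (2 * (norm (v \<gamma> - u \<gamma>))\<^sup>2 + (if v \<gamma> = 0 then 0 else 2 * e\<^sup>2)) * w \<gamma>"
      using shrink_error_sq_le[OF e] w by (rule mult_right_mono)
    ultimately have "?err \<gamma> \<le> ennreal (d + d + I)"
      using I_bound unfolding d_def by (intro ennreal_leI) (simp add: algebra_simps)
    also have "\<dots> = ennreal d + ennreal d + ennreal I"
      using \<open>d \<ge> 0\<close> \<open>I \<ge> 0\<close> by (simp del: ennreal_plus add: ennreal_plus[symmetric])
    finally show ?thesis unfolding d_def I_def .
  qed
  have "(\<Sum>\<^sub>\<infinity>\<gamma>\<in>A. ?err \<gamma>) \<le> (\<Sum>\<^sub>\<infinity>\<gamma>\<in>A. ?dist \<gamma> + ?dist \<gamma> + ?cK \<gamma>)"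
    by (rule infsum_mono) (simp_all add: pointwise nonneg_summable_on_complete)
  also have "\<dots> = 2 * (\<Sum>\<^sub>\<infinity>\<gamma>\<in>A. ?dist \<gamma>) + (\<Sum>\<^sub>\<infinity>\<gamma>\<in>A. ?cK \<gamma>)"
    by (simp add: infsum_add nonneg_summable_on_complete mult_2)
  also have "(\<Sum>\<^sub>\<infinity>\<gamma>\<in>A. ?cK \<gamma>) = of_nat (card (A \<inter> K)) * ennreal c"
    using fin by (subst infsum_cong_neutral[where T = "A \<inter> K" and g = "\<lambda>_. ennreal c"]) auto
  also have "\<dots> \<le> ennreal (c * N)"
  proof (cases "A \<inter> K = {}")
    case False
    then obtain \<gamma> where "\<gamma> \<in> K" by blast
    then have "c \<ge> 0" using W[of \<gamma>] w[of \<gamma>] unfolding c_def by simp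
    then show ?thesis using card
      by (simp add: ennreal_of_nat_eq_real_of_nat ennreal_mult'[symmetric] mult.commute mult_left_mono)
  qed simp
  finally show ?thesis unfolding c_def by (simp add: add_left_mono)
qed

lemma norm2pL_sq_le_fibrewise:
  assumes fibres: "\<And>A. A \<in> range (\<lambda>x. {\<gamma>. s \<gamma> = x}) \<union> range (\<lambda>x. {\<gamma>. r \<gamma> = x}) \<Longrightarrow>
      (\<Sum>\<^sub>\<infinity>\<gamma>\<in>A. ennreal ((sec_abs \<pi> h \<gamma>)\<^sup>2 * (1 + L \<gamma>) ^ (2 * p)))
        \<le> c * (\<Sum>\<^sub>\<infinity>\<gamma>\<in>A. ennreal ((sec_abs \<pi> g \<gamma>)\<^sup>2 * (1 + L \<gamma>) ^ (2 * p))) + C"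
  shows "norm2pL_sq r s \<pi> L p h \<le> c * norm2pL_sq r s \<pi> L p g + C"
proof -
  let ?sum = "\<lambda>f A. \<Sum>\<^sub>\<infinity>\<gamma>\<in>A. ennreal ((sec_abs \<pi> f \<gamma>)\<^sup>2 * (1 + L \<gamma>) ^ (2 * p))"
  have fibre_le: "?sum h A \<le> c * norm2pL_sq r s \<pi> L p g + C"
    if "?sum g A \<le> norm2pL_sq r s \<pi> L p g"
      and "A \<in> range (\<lambda>x. {\<gamma>. s \<gamma> = x}) \<union> range (\<lambda>x. {\<gamma>. r \<gamma> = x})" for A
    using fibres[OF that(2)] that(1) by (meson add_right_mono mult_left_mono order_trans zero_le)
  have "?sum g {\<gamma>. s \<gamma> = x} \<le> norm2pL_sq r s \<pi> L p g"
    and "?sum g {\<gamma>. r \<gamma> = x} \<le> norm2pL_sq r s \<pi> L p g" if "x \<in> range r" for x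
    unfolding norm2pL_sq_def using that
    by (intro order_trans[OF SUP_upper max.cobounded1] order_trans[OF SUP_upper max.cobounded2]; simp)+
  then show ?thesis
    unfolding norm2pL_sq_def[of r s \<pi> L p h] by (intro max.boundedI SUP_least fibre_le) auto
qed

lemma norm2pL_sq_shrink_error_le:
  fixes f g :: "'s \<Rightarrow> complex"
  assumes "surj \<pi>" and e: "e \<ge> 0" and L: "\<And>\<gamma>. L \<gamma> \<ge> 0"
    and g_supp: "\<And>\<sigma>. g \<sigma> \<noteq> 0 \<Longrightarrow> \<pi> \<sigma> \<in> K" and M: "\<And>\<gamma>. \<gamma> \<in> K \<Longrightarrow> L \<gamma> \<le> M"
    and N: "\<And>x. finite {\<gamma>\<in>K. s \<gamma> = x} \<and> card {\<gamma>\<in>K. s \<gamma> = x} \<le> N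
                 \<and> finite {\<gamma>\<in>K. r \<gamma> = x} \<and> card {\<gamma>\<in>K. r \<gamma> = x} \<le> N"
  shows "norm2pL_sq r s \<pi> L p (\<lambda>\<sigma>. shrink e (f \<sigma>) - f \<sigma>)
     \<le> 2 * norm2pL_sq r s \<pi> L p (\<lambda>\<sigma>. g \<sigma> - f \<sigma>) + ennreal (2 * e\<^sup>2 * (1 + M) ^ (2 * p) * N)"
proof (rule norm2pL_sq_le_fibrewise)
  fix A assume "A \<in> range (\<lambda>x. {\<gamma>. s \<gamma> = x}) \<union> range (\<lambda>x. {\<gamma>. r \<gamma> = x})"
  then have "finite (A \<inter> K) \<and> card (A \<inter> K) \<le> N"
    using N by (auto simp: Int_def conj_commute)
  moreover have "g (SOME \<sigma>. \<pi> \<sigma> = \<gamma>) \<noteq> 0 \<Longrightarrow> \<gamma> \<in> K" for \<gamma>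
    using g_supp someI_ex[of "\<lambda>\<sigma>. \<pi> \<sigma> = \<gamma>"] \<open>surj \<pi>\<close> by (metis surjD)
  moreover have "(1 + L \<gamma>) ^ (2 * p) \<le> (1 + M) ^ (2 * p)" if "\<gamma> \<in> K" for \<gamma>
    using L[of \<gamma>] M[OF that] by (intro power_mono) auto
  ultimately show "(\<Sum>\<^sub>\<infinity>\<gamma>\<in>A. ennreal ((sec_abs \<pi> (\<lambda>\<sigma>. shrink e (f \<sigma>) - f \<sigma>) \<gamma>)\<^sup>2 * (1 + L \<gamma>) ^ (2 * p)))
      \<le> 2 * (\<Sum>\<^sub>\<infinity>\<gamma>\<in>A. ennreal ((sec_abs \<pi> (\<lambda>\<sigma>. g \<sigma> - f \<sigma>) \<gamma>)\<^sup>2 * (1 + L \<gamma>) ^ (2 * p)))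
        + ennreal (2 * e\<^sup>2 * (1 + M) ^ (2 * p) * N)"
    \<comment> \<open>sec_abs reads every section at the same representative SOME \<sigma>. \<pi> \<sigma> = \<gamma>\<close>
    unfolding sec_abs_def using L
    by (intro infsum_shrink_error_le[OF e, where K = K]) (simp_all add: mult.assoc)
qed

lemma norm2pL_sq_shrink_error_le_Cc:
  assumes "lch_etale_groupoid r s m i" and "surj \<pi>" and L: "\<And>\<gamma>. L \<gamma> \<ge> 0" "continuous_on UNIV L"
    and g: "g \<in> Cc_sec r mS \<pi> \<iota> UNIV"
  shows "\<exists>C. \<forall>e\<ge>0. norm2pL_sq r s \<pi> L p (\<lambda>\<sigma>. shrink e (f \<sigma>) - f \<sigma>)
                  \<le> 2 * norm2pL_sq r s \<pi> L p (\<lambda>\<sigma>. g \<sigma> - f \<sigma>) + ennreal (C * e\<^sup>2)"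
proof -
  define K where "K = closure (sec_supp \<pi> g)"
  have "compact K" using g by (simp add: Cc_sec_def K_def)
  obtain N where N: "\<And>x. finite {\<gamma>\<in>K. s \<gamma> = x} \<and> card {\<gamma>\<in>K. s \<gamma> = x} \<le> N
                         \<and> finite {\<gamma>\<in>K. r \<gamma> = x} \<and> card {\<gamma>\<in>K. r \<gamma> = x} \<le> N"
    using lch_etale_groupoid_fibres_bounded_on_compact[OF assms(1) \<open>compact K\<close>] by blast
  have "compact (L ` K)"
    using \<open>compact K\<close> continuous_on_subset[OF L(2)] by (blast intro: compact_continuous_image)
  then have "bounded (L ` K)" by (rule compact_imp_bounded)
  then obtain M0 where "\<forall>y\<in>L ` K. \<bar>y\<bar> \<le> M0" by (meson bounded_real)
  then have M: "\<And>\<gamma>. \<gamma> \<in> K \<Longrightarrow> L \<gamma> \<le> M0" by auto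
  have "g \<sigma> \<noteq> 0 \<Longrightarrow> \<pi> \<sigma> \<in> K" for \<sigma>
    unfolding K_def sec_supp_def using closure_subset by fastforce
  note bound = norm2pL_sq_shrink_error_le[OF \<open>surj \<pi>\<close> _ L(1) this M N]
  show ?thesis
  proof (intro exI allI impI)
    fix e :: real assume "e \<ge> 0"
    show "norm2pL_sq r s \<pi> L p (\<lambda>\<sigma>. shrink e (f \<sigma>) - f \<sigma>)
        \<le> 2 * norm2pL_sq r s \<pi> L p (\<lambda>\<sigma>. g \<sigma> - f \<sigma>) + ennreal (2 * (1 + M0) ^ (2 * p) * N * e\<^sup>2)"
      using bound[OF \<open>e \<ge> 0\<close>] by (simp only: mult_ac)
  qed
qed

lemma shrink_comp_mem_Cc_sec:
  assumes "e > 0" and f: "is_section r mS \<pi> \<iota> f" "continuous_on UNIV f"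
    and g: "g \<in> Cc_sec r mS \<pi> \<iota> UNIV" and close: "\<And>\<sigma>. norm (g \<sigma> - f \<sigma>) < e"
  shows "(\<lambda>\<sigma>. shrink e (f \<sigma>)) \<in> Cc_sec r mS \<pi> \<iota> (sec_supp \<pi> f)"
proof -
  have "is_section r mS \<pi> \<iota> (\<lambda>\<sigma>. shrink e (f \<sigma>))"
    using f(1) unfolding is_section_def by (simp add: shrink_mult_unimodular)
  moreover have "continuous_on UNIV (\<lambda>\<sigma>. shrink e (f \<sigma>))"
    using \<open>e > 0\<close> by (intro continuous_on_compose2[OF continuous_on_shrink f(2)]) auto
  moreover have "sec_supp \<pi> (\<lambda>\<sigma>. shrink e (f \<sigma>)) \<subseteq> sec_supp \<pi> g"
    unfolding sec_supp_def
  proof (rule image_mono, safe)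
    fix \<sigma> assume "shrink e (f \<sigma>) \<noteq> 0" "g \<sigma> = 0"
    then show False using close[of \<sigma>] \<open>e > 0\<close> by (simp add: shrink_eq_0_iff)
  qed
  then have "compact (closure (sec_supp \<pi> (\<lambda>\<sigma>. shrink e (f \<sigma>))))"
    using g unfolding Cc_sec_def by (metis (no_types, lifting) closed_closure closure_mono
      compact_Int_closed inf.absorb_iff2 mem_Collect_eq)
  moreover have "sec_supp \<pi> (\<lambda>\<sigma>. shrink e (f \<sigma>)) \<subseteq> sec_supp \<pi> f"
    unfolding sec_supp_def by (rule image_mono) (auto simp: shrink_def)
  ultimately show ?thesis unfolding Cc_sec_def by blast
qed

lemma ennreal_tendsto_0_by_approximation:
  fixes a b :: "nat \<Rightarrow> ennreal" and d :: "nat \<Rightarrow> real"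
  assumes b: "b \<longlonglongrightarrow> 0" and d: "d \<longlonglongrightarrow> 0"
    and approx: "\<And>n. \<exists>C. \<forall>k. a k \<le> b n + ennreal (C * d k)"
  shows "a \<longlonglongrightarrow> 0"
proof (rule order_tendstoI)
  fix y :: ennreal assume "0 < y"
  then obtain z where "0 < z" "z < y" "z < top" using dense less_top by (metis (full_types) order_less_trans)
  define \<delta> where "\<delta> = enn2real z / 2"
  have "\<delta> > 0" and z: "z = ennreal \<delta> + ennreal \<delta>"
    using \<open>0 < z\<close> \<open>z < top\<close> by (auto simp: \<delta>_def enn2real_positive_iff ennreal_plus[symmetric] simp del: ennreal_plus)
  have "eventually (\<lambda>n. b n < ennreal \<delta>) sequentially"
    using \<open>\<delta> > 0\<close> by (intro order_tendstoD(2)[OF b]) simp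
  then obtain n where n: "b n < ennreal \<delta>"
    unfolding eventually_sequentially by blast
  obtain C where C: "\<And>k. a k \<le> b n + ennreal (C * d k)" using approx by blast
  have "(\<lambda>k. C * d k) \<longlonglongrightarrow> C * 0" by (intro tendsto_intros d)
  then have "eventually (\<lambda>k. C * d k < \<delta>) sequentially"
    using \<open>\<delta> > 0\<close> by (intro order_tendstoD(2)) auto
  then show "eventually (\<lambda>k. a k < y) sequentially"
  proof eventually_elim
    case (elim k)
    have "a k < ennreal \<delta> + ennreal \<delta>"
      using C[of k] n ennreal_lessI[OF \<open>\<delta> > 0\<close> elim] by (meson add_strict_mono order_le_less_trans)
    then show ?case using z \<open>z < y\<close> by simp
  qed
qed simp

locale groupoid_twist =
  fixes r s :: "'g::t2_space \<Rightarrow> 'g" and m :: "'g \<Rightarrow> 'g \<Rightarrow> 'g" and i :: "'g \<Rightarrow> 'g"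
    and rS sS :: "'s::topological_space \<Rightarrow> 's" and mS :: "'s \<Rightarrow> 's \<Rightarrow> 's" and iS :: "'s \<Rightarrow> 's"
    and \<pi> :: "'s \<Rightarrow> 'g" and \<iota> :: "complex \<Rightarrow> 'g \<Rightarrow> 's"
  assumes groupoid: "groupoid r s m i"
    and twist: "twist r s m i rS sS mS iS \<pi> \<iota>"
begin

lemma surj_pi: "surj \<pi>"
  using twist unfolding twist_def by blast

lemma r_s_of_unit: "x \<in> range r \<Longrightarrow> r x = x \<and> s x = x"
  using groupoid unfolding groupoid_def by auto

lemma Sigma_groupoid: "groupoid rS sS mS iS"
  using twist unfolding twist_def topological_groupoid_def by blast

lemma composable_if_pi_composable:
  assumes "s (\<pi> a) = r (\<pi> b)"
  shows "sS a = rS b"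
proof -
  have "\<pi> (sS a) = \<pi> (rS b)"
    using twist assms unfolding twist_def by metis
  moreover have "sS a \<in> range rS"
    using Sigma_groupoid unfolding groupoid_def by (metis rangeI)
  moreover have "inj_on \<pi> (range rS)"
    using twist unfolding twist_def by blast
  ultimately show ?thesis by (auto dest: inj_onD)
qed

lemma pi_iota: "z \<in> circle \<Longrightarrow> x \<in> range r \<Longrightarrow> \<pi> (\<iota> z x) = x"
  using twist unfolding twist_def by blast

lemma pi_mS: "s (\<pi> a) = r (\<pi> b) \<Longrightarrow> \<pi> (mS a b) = m (\<pi> a) (\<pi> b)"
  using twist composable_if_pi_composable unfolding twist_def by blast

lemma mS_assoc:
  assumes "s (\<pi> a) = r (\<pi> b)" and "s (\<pi> b) = r (\<pi> c)"
  shows "mS (mS a b) c = mS a (mS b c)"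
  using Sigma_groupoid composable_if_pi_composable[OF assms(1)] composable_if_pi_composable[OF assms(2)]
  unfolding groupoid_def by blast

lemma fibres_are_circle_orbits:
  assumes "\<pi> \<sigma>' = \<pi> \<sigma>"
  shows "\<exists>w\<in>circle. \<sigma>' = tact r mS \<pi> \<iota> w \<sigma>"
proof -
  define \<gamma> where "\<gamma> = \<pi> \<sigma>"
  define x where "x = r \<gamma>"
  have x: "x \<in> range r" "r x = x" "s x = x" using r_s_of_unit[of x] by (auto simp: x_def)
  obtain V c g where V: "\<gamma> \<in> V" "\<forall>\<delta>\<in>V. \<pi> (c \<delta>) = \<delta>"
    and chart: "homeomorphism (circle \<times> V) (\<pi> -` V) (\<lambda>(z, \<delta>). mS (\<iota> z (r \<delta>)) (c \<delta>)) g"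
    using twist unfolding twist_def by meson
  have pi_chart: "\<pi> (mS (\<iota> z (r \<delta>)) (c \<delta>)) = \<delta>" if "z \<in> circle" "\<delta> \<in> V" for z \<delta>
  proof -
    have "s (\<pi> (\<iota> z (r \<delta>))) = r (\<pi> (c \<delta>))"
      using that V r_s_of_unit pi_iota by (metis rangeI)
    then show ?thesis
      using that V pi_mS pi_iota groupoid unfolding groupoid_def by (metis rangeI)
  qed
  have chart_image: "(\<lambda>(z, \<delta>). mS (\<iota> z (r \<delta>)) (c \<delta>)) ` (circle \<times> V) = \<pi> -` V"
    using chart unfolding homeomorphism_def by blast
  have "\<sigma> \<in> \<pi> -` V" "\<sigma>' \<in> \<pi> -` V" using V assms by (auto simp: \<gamma>_def)
  then obtain z \<delta> z' \<delta>' where z: "z \<in> circle" "\<delta> \<in> V" "\<sigma> = mS (\<iota> z (r \<delta>)) (c \<delta>)"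
    and z': "z' \<in> circle" "\<delta>' \<in> V" "\<sigma>' = mS (\<iota> z' (r \<delta>')) (c \<delta>')"
    unfolding chart_image[symmetric] by auto
  have "\<delta> = \<gamma>" "\<delta>' = \<gamma>" using pi_chart z z' assms by (metis \<gamma>_def)+
  then have \<sigma>: "\<sigma> = mS (\<iota> z x) (c \<gamma>)" and \<sigma>': "\<sigma>' = mS (\<iota> z' x) (c \<gamma>)"
    using z z' by (simp_all add: x_def)
  define w where "w = z' / z"
  have w: "w \<in> circle" "w * z = z'" using z(1) z'(1) by (auto simp: w_def norm_divide)
  have "tact r mS \<pi> \<iota> w \<sigma> = mS (\<iota> w x) \<sigma>" by (simp add: tact_def x_def \<gamma>_def)
  also have "\<dots> = mS (\<iota> w x) (mS (\<iota> z x) (c \<gamma>))" using \<sigma> by simp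
  also have "\<dots> = mS (mS (\<iota> w x) (\<iota> z x)) (c \<gamma>)"
    using mS_assoc pi_iota[OF w(1) x(1)] pi_iota[OF z(1) x(1)] x V by (metis x_def)
  also have "mS (\<iota> w x) (\<iota> z x) = \<iota> z' x"
    using twist w z(1) x(1) unfolding twist_def by metis
  finally show ?thesis using w(1) \<sigma>' by metis
qed

lemma norm_section_fibre_eq:
  assumes "is_section r mS \<pi> \<iota> f" and "\<pi> \<sigma>' = \<pi> \<sigma>"
  shows "norm (f \<sigma>') = norm (f \<sigma>)"
proof -
  obtain w where "w \<in> circle" "\<sigma>' = tact r mS \<pi> \<iota> w \<sigma>"
    using fibres_are_circle_orbits[OF assms(2)] by blast
  then show ?thesis using assms(1) unfolding is_section_def by (simp add: norm_mult)
qed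

lemma sec_abs_pi:
  assumes "is_section r mS \<pi> \<iota> f"
  shows "sec_abs \<pi> f (\<pi> \<sigma>) = norm (f \<sigma>)"
  unfolding sec_abs_def by (rule norm_section_fibre_eq[OF assms]) (rule someI, rule refl)

lemma sec_abs_sq_le_norm2pL_sq:
  assumes "\<And>\<gamma>. L \<gamma> \<ge> 0"
  shows "ennreal ((sec_abs \<pi> h \<gamma>)\<^sup>2) \<le> norm2pL_sq r s \<pi> L p h"
proof -
  let ?t = "\<lambda>\<gamma>. ennreal ((sec_abs \<pi> h \<gamma>)\<^sup>2 * (1 + L \<gamma>) ^ (2 * p))"
  have "(sec_abs \<pi> h \<gamma>)\<^sup>2 \<le> (sec_abs \<pi> h \<gamma>)\<^sup>2 * (1 + L \<gamma>) ^ (2 * p)"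
    using assms[of \<gamma>] by (simp add: one_le_power mult_le_cancel_left1)
  then have "ennreal ((sec_abs \<pi> h \<gamma>)\<^sup>2) \<le> (\<Sum>\<^sub>\<infinity>\<gamma>'\<in>{\<gamma>}. ?t \<gamma>')"
    by (simp add: ennreal_leI)
  also have "\<dots> \<le> (\<Sum>\<^sub>\<infinity>\<gamma>'\<in>{\<gamma>'. s \<gamma>' = s \<gamma>}. ?t \<gamma>')"
    by (rule infsum_mono_neutral) (auto simp: nonneg_summable_on_complete)
  also have "\<dots> \<le> (SUP x\<in>range r. \<Sum>\<^sub>\<infinity>\<gamma>'\<in>{\<gamma>'. s \<gamma>' = x}. ?t \<gamma>')"
    using groupoid unfolding groupoid_def by (intro SUP_upper) (metis rangeI)
  also have "\<dots> \<le> norm2pL_sq r s \<pi> L p h"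
    unfolding norm2pL_sq_def by simp
  finally show ?thesis .
qed

lemma uniform_limit_if_norm2pL_sq_tendsto:
  assumes "\<And>\<gamma>. L \<gamma> \<ge> 0" and "\<And>n. is_section r mS \<pi> \<iota> (F n)" and "is_section r mS \<pi> \<iota> f"
    and lim: "(\<lambda>n. norm2pL_sq r s \<pi> L p (\<lambda>\<sigma>. F n \<sigma> - f \<sigma>)) \<longlonglongrightarrow> 0"
  shows "uniform_limit UNIV F f sequentially"
proof (rule uniform_limitI)
  fix e :: real assume "e > 0"
  have "norm (F n \<sigma> - f \<sigma>) < e"
    if "norm2pL_sq r s \<pi> L p (\<lambda>\<sigma>. F n \<sigma> - f \<sigma>) < ennreal (e\<^sup>2)" for n \<sigma>
  proof -
    have "is_section r mS \<pi> \<iota> (\<lambda>\<sigma>. F n \<sigma> - f \<sigma>)"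
      using assms(2,3) unfolding is_section_def by (simp add: right_diff_distrib)
    then have "sec_abs \<pi> (\<lambda>\<sigma>. F n \<sigma> - f \<sigma>) (\<pi> \<sigma>) = norm (F n \<sigma> - f \<sigma>)"
      by (rule sec_abs_pi)
    then have "ennreal ((norm (F n \<sigma> - f \<sigma>))\<^sup>2) \<le> norm2pL_sq r s \<pi> L p (\<lambda>\<sigma>. F n \<sigma> - f \<sigma>)"
      using sec_abs_sq_le_norm2pL_sq[OF assms(1), where h = "\<lambda>\<sigma>. F n \<sigma> - f \<sigma>" and \<gamma> = "\<pi> \<sigma>"]
      by simp
    then have "ennreal ((norm (F n \<sigma> - f \<sigma>))\<^sup>2) < ennreal (e\<^sup>2)"
      using that by (rule le_less_trans)
    then have "(norm (F n \<sigma> - f \<sigma>))\<^sup>2 < e\<^sup>2"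
      by (simp add: ennreal_less_iff)
    then show ?thesis using \<open>e > 0\<close> by (simp add: power_less_imp_less_base)
  qed
  moreover have "eventually (\<lambda>n. norm2pL_sq r s \<pi> L p (\<lambda>\<sigma>. F n \<sigma> - f \<sigma>) < ennreal (e\<^sup>2)) sequentially"
    using \<open>e > 0\<close> by (intro order_tendstoD(2)[OF lim]) simp
  ultimately show "\<forall>\<^sub>F n in sequentially. \<forall>\<sigma>\<in>UNIV. dist (F n \<sigma>) (f \<sigma>) < e"
    by (auto elim: eventually_mono simp: dist_norm)
qed

lemma H2Lp_mem_closure_Cc_supp:
  assumes etale: "lch_etale_groupoid r s m i" and L: "\<And>\<gamma>. L \<gamma> \<ge> 0" "continuous_on UNIV L"
    and f: "f \<in> H2Lp r s mS \<pi> \<iota> L p"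
  shows "f \<in> sec_closure r s mS \<pi> \<iota> L p (Cc_sec r mS \<pi> \<iota> (sec_supp \<pi> f))"
proof -
  obtain F where f_sec: "is_section r mS \<pi> \<iota> f" and F: "\<And>n. F n \<in> Cc_sec r mS \<pi> \<iota> UNIV"
    and lim: "(\<lambda>n. norm2pL_sq r s \<pi> L p (\<lambda>\<sigma>. F n \<sigma> - f \<sigma>)) \<longlonglongrightarrow> 0"
    using f unfolding H2Lp_def sec_closure_def by blast
  have unif: "uniform_limit UNIV F f sequentially"
    using F f_sec lim by (intro uniform_limit_if_norm2pL_sq_tendsto[OF L(1)]) (auto simp: Cc_sec_def)
  then have "continuous_on UNIV f"
    using F by (intro uniform_limit_theorem) (auto simp: Cc_sec_def)
  define e where "e k = inverse (real (Suc k))" for k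
  have e: "e k > 0" for k by (simp add: e_def)
  have "(\<lambda>\<sigma>. shrink (e k) (f \<sigma>)) \<in> Cc_sec r mS \<pi> \<iota> (sec_supp \<pi> f)" for k
  proof -
    obtain n where "\<forall>\<sigma>. dist (F n \<sigma>) (f \<sigma>) < e k"
      using eventually_happens[OF uniform_limitD[OF unif e]] by auto
    then show ?thesis
      using e f_sec \<open>continuous_on UNIV f\<close> F by (intro shrink_comp_mem_Cc_sec) (auto simp: dist_norm)
  qed
  moreover have "(\<lambda>k. norm2pL_sq r s \<pi> L p (\<lambda>\<sigma>. shrink (e k) (f \<sigma>) - f \<sigma>)) \<longlonglongrightarrow> 0"
  proof (rule ennreal_tendsto_0_by_approximation)
    show "(\<lambda>n. 2 * norm2pL_sq r s \<pi> L p (\<lambda>\<sigma>. F n \<sigma> - f \<sigma>)) \<longlonglongrightarrow> 0"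
      using ennreal_tendsto_cmult[OF _ lim, of 2] by simp
    show "(\<lambda>k. (e k)\<^sup>2) \<longlonglongrightarrow> 0"
      unfolding e_def using tendsto_power[OF LIMSEQ_inverse_real_of_nat, of 2] by simp
    show "\<exists>C. \<forall>k. norm2pL_sq r s \<pi> L p (\<lambda>\<sigma>. shrink (e k) (f \<sigma>) - f \<sigma>)
               \<le> 2 * norm2pL_sq r s \<pi> L p (\<lambda>\<sigma>. F n \<sigma> - f \<sigma>) + ennreal (C * (e k)\<^sup>2)" for n
    proof -
      obtain C where "\<forall>\<epsilon>\<ge>0. norm2pL_sq r s \<pi> L p (\<lambda>\<sigma>. shrink \<epsilon> (f \<sigma>) - f \<sigma>)
          \<le> 2 * norm2pL_sq r s \<pi> L p (\<lambda>\<sigma>. F n \<sigma> - f \<sigma>) + ennreal (C * \<epsilon>\<^sup>2)"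
        using norm2pL_sq_shrink_error_le_Cc[OF etale surj_pi L F, where p = p and f = f] by blast
      then show ?thesis using e by (intro exI[of _ C] allI) (simp add: less_imp_le)
    qed
  qed
  ultimately show ?thesis
    unfolding sec_closure_def using f_sec by (intro CollectI conjI exI[of _ "\<lambda>k \<sigma>. shrink (e k) (f \<sigma>)"]) auto
qed

end

theorem proposition3p8:
  fixes r s :: "'g::t2_space \<Rightarrow> 'g" and m :: "'g \<Rightarrow> 'g \<Rightarrow> 'g" and i :: "'g \<Rightarrow> 'g"
    and rS sS :: "'s::topological_space \<Rightarrow> 's" and mS :: "'s \<Rightarrow> 's \<Rightarrow> 's" and iS :: "'s \<Rightarrow> 's"
    and \<pi> :: "'s \<Rightarrow> 'g" and \<iota> :: "complex \<Rightarrow> 'g \<Rightarrow> 's"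
    and L :: "'g \<Rightarrow> real"
  assumes "lch_etale_groupoid r s m i"
    and "twist r s m i rS sS mS iS \<pi> \<iota>"
    and "length_function r s m i L"
    and "continuous_on UNIV L"
  shows "(\<forall>(p::nat) f. f \<in> H2Lp r s mS \<pi> \<iota> L p \<and> open (sec_supp \<pi> f) \<longrightarrow>
            f \<in> sec_closure r s mS \<pi> \<iota> L p (Cc_sec r mS \<pi> \<iota> (sec_supp \<pi> f)))
       \<and> (\<forall>f. f \<in> H2L r s mS \<pi> \<iota> L UNIV \<and> open (sec_supp \<pi> f) \<longrightarrow>
            f \<in> H2L r s mS \<pi> \<iota> L (sec_supp \<pi> f))"
proof -
  interpret groupoid_twist r s m i rS sS mS iS \<pi> \<iota>
    using assms(1,2) by unfold_locales (simp_all add: lch_etale_groupoid_def topological_groupoid_def)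
  have "\<And>\<gamma>. L \<gamma> \<ge> 0"
    using assms(3) unfolding length_function_def by blast
  note approx = H2Lp_mem_closure_Cc_supp[OF assms(1) this assms(4)]
  show ?thesis
  proof (intro conjI allI impI)
    fix p f assume "f \<in> H2Lp r s mS \<pi> \<iota> L p \<and> open (sec_supp \<pi> f)"
    then show "f \<in> sec_closure r s mS \<pi> \<iota> L p (Cc_sec r mS \<pi> \<iota> (sec_supp \<pi> f))"
      using approx by blast
  next
    fix f assume f: "f \<in> H2L r s mS \<pi> \<iota> L UNIV \<and> open (sec_supp \<pi> f)"
    then have "f \<in> H2Lp r s mS \<pi> \<iota> L p" for p
      unfolding H2L_def H2Lp_def by blast
    then show "f \<in> H2L r s mS \<pi> \<iota> L (sec_supp \<pi> f)"
      using f approx unfolding H2L_def C0_sec_def by blast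
  qed
qed

end
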